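(* Let $n\ge 6$ be an integer and $k$ an integer with $(n+1)/2\le k\le n-3$. If $\gcd(n,k)=\gcd(n,k+1)=1$, then $\mathsf{BO}(k,\mathbb{Z}/n\mathbb{Z})=k+1$.
   Context: For a positive integer $k$, a set $\{g_1,\dots,g_k\}$ of $k$ distinct elements of a finite abelian group $G$ (written additively) is called $k$-barycentric if $\sum_{i=1}^k g_i = k\,g_j$ for some $1\le j\le k$. The $k$-th barycentric Olson constant $\mathsf{BO}(k,G)$ is the smallest integer $\ell$ such that every subset $A\subseteq G$ with $|A|\ge \ell$ contains a $k$-barycentric subset (so that always $\mathsf{BO}(k,G)\le |G|+1$). *)

theory Defs
  imports Main
begin

text \<open>The cyclic group Z/nZ is modelled by the carrier {0..<n} of integers with
addition modulo n.\<close>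

definition zn :: "nat \<Rightarrow> int set" where
  "zn n = {0..<int n}"

definition barycentric_zn :: "nat \<Rightarrow> nat \<Rightarrow> int set \<Rightarrow> bool" where
  "barycentric_zn n k S \<longleftrightarrow> S \<subseteq> zn n \<and> card S = k \<and>
     (\<exists>g\<in>S. \<Sum>S mod int n = (int k * g) mod int n)"

definition BO_zn :: "nat \<Rightarrow> nat \<Rightarrow> nat" where
  "BO_zn k n = (LEAST l. \<forall>A. A \<subseteq> zn n \<longrightarrow> card A \<ge> l \<longrightarrow>
                   (\<exists>S\<subseteq>A. barycentric_zn n k S))"

end

theory Submission
  imports Defs "HOL-Number_Theory.Cong"
begin

(* Upper bound, BO(k, Z/nZ) <= k+1 (valid whenever n <= 2k): fix k+1 elements B of a large set
   and put s = sum B.  Deleting b from B leaves a k-barycentric set with witness g whenever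
   b is the partner s - k g (mod n) of g and g <> b.  Since k is a unit, the partner map is
   injective, so at most n - (k+1) <= k - 1 points of B have their partner outside B: at least
   two points of B have their partner in B.  Since k+1 is a unit, at most one point is its own
   partner, so one of them gives a pair g <> b.

   Lower bound (valid whenever n is odd and k < n <= 3k, k+2 < n): the interval {0..k} with one
   point removed (0 if k is even, (n-k)/2 if k is odd) is a k-set whose double sum is k*c mod n
   for the odd number c in {k+1, k+2}; being barycentric would force 2g = c. *)

lemma zn_cong_cancel:
  fixes c a b :: int
  assumes "coprime c (int n)" and "a \<in> zn n" and "b \<in> zn n"
    and "[c * a = c * b] (mod int n)"
  shows "a = b"
proof -
  have "[a = b] (mod int n)" using assms(1,4) by (simp add: cong_mult_lcancel)
  with assms(2,3) show ?thesis by (auto simp: zn_def intro: cong_less_imp_eq_int)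
qed

lemma dvd_small_eq_0:
  fixes t :: int
  assumes "int n dvd t" and "\<bar>t\<bar> < int n"
  shows "t = 0"
  using dvd_imp_le_int[of t "int n"] assms by force

lemma no_barycentric_subset_of_card:
  assumes "finite A" and "card A = k" and "\<not> barycentric_zn n k A"
  shows "\<not> (\<exists>S\<subseteq>A. barycentric_zn n k S)"
proof
  assume "\<exists>S\<subseteq>A. barycentric_zn n k S"
  then obtain S where S: "S \<subseteq> A" "barycentric_zn n k S" by blast
  then have "card S = card A" using assms(2) by (simp add: barycentric_zn_def)
  with S(1) assms(1) have "S = A" by (simp add: card_subset_eq)
  with S(2) assms(3) show False by simp
qed

lemma BO_zn_eqI:
  assumes large: "\<And>A. A \<subseteq> zn n \<Longrightarrow> m \<le> card A \<Longrightarrow> \<exists>S\<subseteq>A. barycentric_zn n k S"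
    and A0: "A0 \<subseteq> zn n" "card A0 + 1 = m" "\<not> (\<exists>S\<subseteq>A0. barycentric_zn n k S)"
  shows "BO_zn k n = m"
  unfolding BO_zn_def
proof (rule Least_equality)
  show "\<forall>A. A \<subseteq> zn n \<longrightarrow> m \<le> card A \<longrightarrow> (\<exists>S\<subseteq>A. barycentric_zn n k S)"
    using large by blast
  fix l
  assume "\<forall>A. A \<subseteq> zn n \<longrightarrow> l \<le> card A \<longrightarrow> (\<exists>S\<subseteq>A. barycentric_zn n k S)"
  with A0 have "\<not> l \<le> card A0" by blast
  with A0(2) show "m \<le> l" by simp
qed

lemma card_returning_points:
  assumes "finite U" and "B \<subseteq> U" and "inj_on f B" and "f ` B \<subseteq> U"
  shows "card B \<le> card {g \<in> B. f g \<in> B} + (card U - card B)"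
proof -
  let ?D = "{g \<in> B. f g \<in> B}"
  have finB: "finite B" using finite_subset[OF assms(2,1)] .
  have "card (B - ?D) \<le> card (U - B)"
  proof (rule card_inj_on_le)
    show "inj_on f (B - ?D)" by (rule inj_on_subset[OF assms(3)]) auto
    show "f ` (B - ?D) \<subseteq> U - B" using assms(4) by auto
    show "finite (U - B)" using assms(1) by simp
  qed
  moreover have "card (B - ?D) = card B - card ?D"
    using finB by (intro card_Diff_subset) auto
  moreover have "card (U - B) = card U - card B"
    using finB assms(2) by (rule card_Diff_subset)
  moreover have "card ?D \<le> card B" using finB by (intro card_mono) auto
  ultimately show ?thesis by linarith
qed

lemma barycentric_after_removal:
  assumes "finite B" and "B \<subseteq> zn n" and "card B = k + 1"
    and "g \<in> B" and "b \<in> B" and "g \<noteq> b"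
    and "[\<Sum>B - b = int k * g] (mod int n)"
  shows "barycentric_zn n k (B - {b})"
  unfolding barycentric_zn_def
proof (intro conjI bexI)
  show "B - {b} \<subseteq> zn n" "card (B - {b}) = k" "g \<in> B - {b}"
    using assms by auto
  show "\<Sum>(B - {b}) mod int n = int k * g mod int n"
    using assms(1,5,7) by (simp add: sum_diff1 cong_def)
qed

text \<open>For a (k+1)-set with sum s, removing partner n k s g makes g a barycentric witness:
  it is the residue b with s - b = k g modulo n.\<close>

definition partner :: "nat \<Rightarrow> nat \<Rightarrow> int \<Rightarrow> int \<Rightarrow> int" where
  "partner n k s g = (s - int k * g) mod int n"

lemma partner_zn: "0 < n \<Longrightarrow> partner n k s g \<in> zn n"
  by (simp add: partner_def zn_def)

lemma partner_cong: "[s - partner n k s g = int k * g] (mod int n)"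
  by (simp add: partner_def cong_def mod_diff_right_eq)

lemma inj_on_partner:
  assumes "coprime k n"
  shows "inj_on (partner n k s) (zn n)"
proof (rule inj_onI)
  fix g1 g2 assume g: "g1 \<in> zn n" "g2 \<in> zn n" "partner n k s g1 = partner n k s g2"
  have "[int k * g1 = int k * g2] (mod int n)"
    using partner_cong[of s n k g1] partner_cong[of s n k g2] g(3) by (metis cong_sym cong_trans)
  then show "g1 = g2" using zn_cong_cancel[of "int k" n g1 g2] assms g(1,2) by simp
qed

text \<open>Since k+1 is a unit modulo n, at most one residue is its own partner: a fixed point g
  satisfies (k+1) g = s modulo n.\<close>

lemma partner_fixed_point_unique:
  assumes "coprime (k + 1) n" and "g1 \<in> zn n" and "g2 \<in> zn n"
    and "partner n k s g1 = g1" and "partner n k s g2 = g2"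
  shows "g1 = g2"
proof -
  have fixed: "[s = (int k + 1) * g] (mod int n)" if "partner n k s g = g" for g
    using partner_cong[of s n k g] that by (simp add: cong_iff_dvd_diff algebra_simps)
  have "[(int k + 1) * g1 = (int k + 1) * g2] (mod int n)"
    using fixed[OF assms(4)] fixed[OF assms(5)] by (metis cong_sym cong_trans)
  moreover have "coprime (int k + 1) (int n)"
    using assms(1) coprime_int_iff[of "k + 1" n] by (simp add: add.commute)
  ultimately show "g1 = g2" using zn_cong_cancel assms(2,3) by blast
qed

text \<open>At least two points of B have their partner
  in B (pigeonhole), and at most one of them is its own partner.\<close>

lemma exists_removal_pair:
  assumes "n \<le> 2 * k" and cop: "coprime k n" and cop1: "coprime (k + 1) n"
    and B: "B \<subseteq> zn n" "card B = k + 1"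
  shows "\<exists>g\<in>B. \<exists>b\<in>B. g \<noteq> b \<and> [\<Sum>B - b = int k * g] (mod int n)"
proof -
  let ?p = "partner n k (\<Sum>B)"
  let ?D = "{g \<in> B. ?p g \<in> B}"
  have fin: "finite (zn n)" and card_zn: "card (zn n) = n" by (simp_all add: zn_def)
  have "k + 1 \<le> n" using card_mono[OF fin B(1)] B(2) card_zn by simp
  then have "?p ` B \<subseteq> zn n" using partner_zn by auto
  then have "card B \<le> card ?D + (n - card B)"
    using card_returning_points[OF fin B(1)] inj_on_subset[OF inj_on_partner[OF cop] B(1)]
      card_zn by simp
  then have two_returning: "2 \<le> card ?D" using assms(1) B(2) \<open>k + 1 \<le> n\<close> by linarith
  have "\<exists>g\<in>?D. ?p g \<noteq> g"
  proof (rule ccontr)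
    assume "\<not> ?thesis"
    then have "\<forall>a\<in>?D. \<forall>b\<in>?D. a = b"
      using partner_fixed_point_unique[OF cop1] B(1) by blast
    moreover have "finite ?D" using finite_subset[OF B(1) fin] by simp
    ultimately have "card ?D \<le> 1" using card_le_Suc0_iff_eq[of ?D] by simp
    with two_returning show False by simp
  qed
  then obtain g where "g \<in> B" "?p g \<in> B" "g \<noteq> ?p g" by auto
  with partner_cong[of "\<Sum>B" n k g] show ?thesis by blast
qed

lemma barycentric_subset_of_large_set:
  assumes "n \<le> 2 * k" and "coprime k n" and "coprime (k + 1) n"
    and A: "A \<subseteq> zn n" "k + 1 \<le> card A"
  shows "\<exists>S\<subseteq>A. barycentric_zn n k S"
proof -
  obtain B where B: "B \<subseteq> A" "card B = k + 1" "finite B"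
    using obtain_subset_with_card_n[OF A(2)] by blast
  with A(1) have Bz: "B \<subseteq> zn n" by blast
  obtain g b where "g \<in> B" "b \<in> B" "g \<noteq> b" "[\<Sum>B - b = int k * g] (mod int n)"
    using exists_removal_pair[OF assms(1-3) Bz B(2)] by blast
  then have "barycentric_zn n k (B - {b})"
    using barycentric_after_removal[OF B(3) Bz B(2)] by blast
  with B(1) show ?thesis by blast
qed

definition gap :: "nat \<Rightarrow> nat \<Rightarrow> int" where
  "gap n k = (if even k then 0 else (int n - int k) div 2)"

definition gap_set :: "nat \<Rightarrow> nat \<Rightarrow> int set" where
  "gap_set n k = {0..int k} - {gap n k}"

text \<open>For odd n the removed point is a genuine integer (n - k)/2 when k is odd; it lies in
  the interval {0..k} as long as k < n \<le> 3k.\<close>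

lemma two_gap:
  assumes "odd n"
  shows "2 * gap n k = (if even k then 0 else int n - int k)"
  using assms by (auto simp: gap_def)

lemma gap_bounds:
  assumes "odd n" and "k < n" and "n \<le> 3 * k"
  shows "0 \<le> gap n k" and "gap n k \<le> int k"
  using two_gap[OF assms(1), of k] assms(2,3) by (auto split: if_splits)

lemma gap_set_zn_card:
  assumes "odd n" and "k < n" and "n \<le> 3 * k"
  shows "gap_set n k \<subseteq> zn n" and "card (gap_set n k) = k"
proof -
  show "card (gap_set n k) = k" using gap_bounds[OF assms] by (simp add: gap_set_def)
  show "gap_set n k \<subseteq> zn n" using assms(2) by (auto simp: gap_set_def zn_def)
qed

lemma two_sum_gap_set:
  assumes "odd n" and "k < n" and "n \<le> 3 * k"
  shows "[2 * \<Sum>(gap_set n k) = int k * (if even k then int k + 1 else int k + 2)] (mod int n)"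
proof -
  have "2 * \<Sum>{0..int k} = int k * (int k + 1)"
    using Sum_Icc_int[of 0 "int k"] by simp
  then have "2 * \<Sum>(gap_set n k) = int k * (int k + 1) - 2 * gap n k"
    using gap_bounds[OF assms] by (simp add: gap_set_def sum_diff1 algebra_simps)
  moreover have "2 * gap n k = (if even k then 0 else int n - int k)"
    using two_gap[OF assms(1)] .
  ultimately have "2 * \<Sum>(gap_set n k) - int k * (if even k then int k + 1 else int k + 2)
      = (if even k then 0 else - int n)"
    by (cases "even k") (simp_all add: algebra_simps)
  then show ?thesis by (simp add: cong_iff_dvd_diff split: if_splits)
qed

lemma gap_set_no_barycentric_subset:
  assumes "odd n" and "n \<le> 3 * k" and "k + 3 \<le> n" and cop: "coprime k n"
  shows "\<not> (\<exists>S\<subseteq>gap_set n k. barycentric_zn n k S)"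
proof (rule no_barycentric_subset_of_card)
  let ?c = "if even k then int k + 1 else int k + 2"
  show "finite (gap_set n k)" by (simp add: gap_set_def)
  show "card (gap_set n k) = k" using gap_set_zn_card assms by simp
  show "\<not> barycentric_zn n k (gap_set n k)"
  proof
    assume "barycentric_zn n k (gap_set n k)"
    then obtain g where g: "g \<in> gap_set n k" "[\<Sum>(gap_set n k) = int k * g] (mod int n)"
      by (auto simp: barycentric_zn_def cong_def)
    have "[int k * ?c = 2 * \<Sum>(gap_set n k)] (mod int n)"
      using two_sum_gap_set[OF assms(1)] assms(2,3) by (simp add: cong_sym)
    also have "[2 * \<Sum>(gap_set n k) = int k * (2 * g)] (mod int n)"
      using cong_scalar_left[OF g(2), of 2] by (simp add: ac_simps)
    finally have "[int k * ?c = int k * (2 * g)] (mod int n)" .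
    then have "[?c = 2 * g] (mod int n)"
      using cong_mult_lcancel[of "int k" "int n"] cop by simp
    then have "int n dvd ?c - 2 * g" by (simp add: cong_iff_dvd_diff)
    moreover have "\<bar>?c - 2 * g\<bar> < int n" using g(1) assms(3) by (auto simp: gap_set_def)
    ultimately have "?c - 2 * g = 0" by (rule dvd_small_eq_0)
    then have "even ?c" by simp
    then show False by (simp split: if_splits)
  qed
qed

lemma odd_of_coprime_consecutive:
  fixes n k :: nat
  assumes "coprime k n" and "coprime (k + 1) n"
  shows "odd n"
proof
  assume "even n"
  moreover have "even k \<or> even (k + 1)" by simp
  ultimately show False using assms by (metis coprime_common_divisor odd_one)
qed

theorem mainTheorem5:
  fixes n k :: nat
  assumes "n \<ge> 6" and "n + 1 \<le> 2 * k" and "k + 3 \<le> n"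
    and "gcd n k = 1" and "gcd n (k + 1) = 1"
  shows "BO_zn k n = k + 1"
proof -
  have cop: "coprime k n" and cop1: "coprime (k + 1) n"
    using assms(4,5) by (simp_all add: coprime_iff_gcd_eq_1 gcd.commute)
  have "odd n" using odd_of_coprime_consecutive[OF cop cop1] .
  have "n \<le> 3 * k" using assms(2) by linarith
  show ?thesis
  proof (rule BO_zn_eqI)
    show "\<exists>S\<subseteq>A. barycentric_zn n k S" if "A \<subseteq> zn n" "k + 1 \<le> card A" for A
      using barycentric_subset_of_large_set[OF _ cop cop1 that] assms(2) by simp
    show "gap_set n k \<subseteq> zn n" "card (gap_set n k) + 1 = k + 1"
      using gap_set_zn_card[OF \<open>odd n\<close> _ \<open>n \<le> 3 * k\<close>] assms(3) by simp_all
    show "\<not> (\<exists>S\<subseteq>gap_set n k. barycentric_zn n k S)"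
      using gap_set_no_barycentric_subset[OF \<open>odd n\<close> \<open>n \<le> 3 * k\<close> assms(3) cop] .
  qed
qed

end
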